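(* Let $\{\mathcal A_i\}_{i\ge1}$ be C*-algebras, $\alpha_1:\mathcal A_1\to\mathcal A_1$ a $*$-homomorphism, and $\beta_i:\mathcal A_i\to\mathcal A_{i+1}$ ($i\ge1$) $*$-isomorphisms. Define $\alpha_i:=\beta_{i-1}\circ\alpha_{i-1}\circ\beta_{i-1}^{-1}:\mathcal A_i\to\mathcal A_i$ for $i\ge2$, and $\varphi_i:=\beta_i\circ\alpha_i:\mathcal A_i\to\mathcal A_{i+1}$ for $i\ge1$. Then $\varphi_i=\alpha_{i+1}\circ\beta_i$ for all $i\ge1$, and the diagram consisting of the horizontal maps $\varphi_i$ (in two rows), the vertical maps $\alpha_i$ and the diagonal maps $\beta_i$ (from the $i$-th entry of the lower row to the $(i+1)$-th entry of the upper row) commutes; in particular $\varphi_i\circ\alpha_i=\alpha_{i+1}\circ\varphi_i$. Moreover, letting $\mathcal A_\infty$ be the inductive limit of $\mathcal A_1\xrightarrow{\varphi_1}\mathcal A_2\xrightarrow{\varphi_2}\cdots$ with canonical maps $\varphi_{\infty i}:\mathcal A_i\to\mathcal A_\infty$, the maps $\{\alpha_i\}$ and $\{\beta_i\}$ induce $*$-homomorphisms $\alpha_\infty,\beta_\infty:\mathcal A_\infty\to\mathcal A_\infty$, determined by $\alpha_\infty(\varphi_{\infty i}(a))=\varphi_{\infty i}(\alpha_i(a))$ and $\beta_\infty(\varphi_{\infty i}(a))=\varphi_{\infty,i+1}(\beta_i(a))$, which are inverses of each other. *)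

theory Defs
  imports Complex_Main
begin

record 'a cstar =
  cs_carrier :: "'a set"
  cs_zero :: 'a
  cs_add :: "'a \<Rightarrow> 'a \<Rightarrow> 'a"
  cs_scale :: "complex \<Rightarrow> 'a \<Rightarrow> 'a"
  cs_mult :: "'a \<Rightarrow> 'a \<Rightarrow> 'a"
  cs_star :: "'a \<Rightarrow> 'a"
  cs_norm :: "'a \<Rightarrow> real"

definition cs_diff :: "'a cstar \<Rightarrow> 'a \<Rightarrow> 'a \<Rightarrow> 'a" where
  "cs_diff A x y = cs_add A x (cs_scale A (-1) y)"

definition cstar_algebra :: "'a cstar \<Rightarrow> bool" where
  "cstar_algebra A \<longleftrightarrow>
    (let C = cs_carrier A; z = cs_zero A; ad = cs_add A; sc = cs_scale A;
         mu = cs_mult A; st = cs_star A; nm = cs_norm A in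
     \<comment> \<open>closure\<close>
     z \<in> C \<and>
     (\<forall>x\<in>C. \<forall>y\<in>C. ad x y \<in> C \<and> mu x y \<in> C) \<and>
     (\<forall>c. \<forall>x\<in>C. sc c x \<in> C) \<and> (\<forall>x\<in>C. st x \<in> C) \<and>
     \<comment> \<open>complex vector space\<close>
     (\<forall>x\<in>C. \<forall>y\<in>C. \<forall>w\<in>C. ad (ad x y) w = ad x (ad y w)) \<and>
     (\<forall>x\<in>C. \<forall>y\<in>C. ad x y = ad y x) \<and>
     (\<forall>x\<in>C. ad z x = x) \<and>
     (\<forall>x\<in>C. ad x (sc (-1) x) = z) \<and>
     (\<forall>x\<in>C. sc 1 x = x) \<and>
     (\<forall>a b. \<forall>x\<in>C. sc a (sc b x) = sc (a * b) x) \<and>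
     (\<forall>a b. \<forall>x\<in>C. sc (a + b) x = ad (sc a x) (sc b x)) \<and>
     (\<forall>a. \<forall>x\<in>C. \<forall>y\<in>C. sc a (ad x y) = ad (sc a x) (sc a y)) \<and>
     \<comment> \<open>associative algebra\<close>
     (\<forall>x\<in>C. \<forall>y\<in>C. \<forall>w\<in>C. mu (mu x y) w = mu x (mu y w)) \<and>
     (\<forall>x\<in>C. \<forall>y\<in>C. \<forall>w\<in>C. mu (ad x y) w = ad (mu x w) (mu y w)) \<and>
     (\<forall>x\<in>C. \<forall>y\<in>C. \<forall>w\<in>C. mu x (ad y w) = ad (mu x y) (mu x w)) \<and>
     (\<forall>a. \<forall>x\<in>C. \<forall>y\<in>C. mu (sc a x) y = sc a (mu x y) \<and> mu x (sc a y) = sc a (mu x y)) \<and>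
     \<comment> \<open>involution\<close>
     (\<forall>x\<in>C. st (st x) = x) \<and>
     (\<forall>x\<in>C. \<forall>y\<in>C. st (ad x y) = ad (st x) (st y)) \<and>
     (\<forall>a. \<forall>x\<in>C. st (sc a x) = sc (cnj a) (st x)) \<and>
     (\<forall>x\<in>C. \<forall>y\<in>C. st (mu x y) = mu (st y) (st x)) \<and>
     \<comment> \<open>norm\<close>
     (\<forall>x\<in>C. nm x \<ge> 0 \<and> (nm x = 0 \<longleftrightarrow> x = z)) \<and>
     (\<forall>x\<in>C. \<forall>y\<in>C. nm (ad x y) \<le> nm x + nm y) \<and>
     (\<forall>a. \<forall>x\<in>C. nm (sc a x) = cmod a * nm x) \<and>
     (\<forall>x\<in>C. \<forall>y\<in>C. nm (mu x y) \<le> nm x * nm y) \<and>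
     \<comment> \<open>C*-identity\<close>
     (\<forall>x\<in>C. nm (mu (st x) x) = nm x ^ 2) \<and>
     \<comment> \<open>completeness\<close>
     (\<forall>s. (\<forall>n. s n \<in> C) \<longrightarrow>
          (\<forall>e>0. \<exists>N. \<forall>m\<ge>N. \<forall>n\<ge>N. nm (cs_diff A (s m) (s n)) < e) \<longrightarrow>
          (\<exists>l\<in>C. (\<lambda>n. nm (cs_diff A (s n) l)) \<longlonglongrightarrow> 0)))"

text \<open>*-homomorphisms (only their behaviour on the carrier matters).\<close>

definition star_hom :: "'a cstar \<Rightarrow> 'b cstar \<Rightarrow> ('a \<Rightarrow> 'b) \<Rightarrow> bool" where
  "star_hom A B f \<longleftrightarrow>
    (\<forall>x\<in>cs_carrier A. f x \<in> cs_carrier B) \<and>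
    (\<forall>x\<in>cs_carrier A. \<forall>y\<in>cs_carrier A. f (cs_add A x y) = cs_add B (f x) (f y)) \<and>
    (\<forall>c. \<forall>x\<in>cs_carrier A. f (cs_scale A c x) = cs_scale B c (f x)) \<and>
    (\<forall>x\<in>cs_carrier A. \<forall>y\<in>cs_carrier A. f (cs_mult A x y) = cs_mult B (f x) (f y)) \<and>
    (\<forall>x\<in>cs_carrier A. f (cs_star A x) = cs_star B (f x))"

definition star_iso :: "'a cstar \<Rightarrow> 'b cstar \<Rightarrow> ('a \<Rightarrow> 'b) \<Rightarrow> bool" where
  "star_iso A B f \<longleftrightarrow> star_hom A B f \<and> bij_betw f (cs_carrier A) (cs_carrier B)"

text \<open>(L, psi) is an inductive limit of the sequence A 0 --phi 0--> A 1 --phi 1--> ...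
  in the category of C*-algebras, characterised by its universal property
  (tested against C*-algebras whose carrier lives in the ambient type of L).\<close>

definition inductive_limit ::
  "(nat \<Rightarrow> 'a cstar) \<Rightarrow> (nat \<Rightarrow> 'a \<Rightarrow> 'a) \<Rightarrow> 'b cstar \<Rightarrow> (nat \<Rightarrow> 'a \<Rightarrow> 'b) \<Rightarrow> bool" where
  "inductive_limit A phi L psi \<longleftrightarrow>
    cstar_algebra L \<and>
    (\<forall>i. star_hom (A i) L (psi i)) \<and>
    (\<forall>i. \<forall>a\<in>cs_carrier (A i). psi (Suc i) (phi i a) = psi i a) \<and>
    (\<forall>(B :: 'b cstar) chi. cstar_algebra B \<longrightarrow> (\<forall>i. star_hom (A i) B (chi i)) \<longrightarrow>
       (\<forall>i. \<forall>a\<in>cs_carrier (A i). chi (Suc i) (phi i a) = chi i a) \<longrightarrow>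
       (\<exists>f. star_hom L B f \<and> (\<forall>i. \<forall>a\<in>cs_carrier (A i). f (psi i a) = chi i a)) \<and>
       (\<forall>f g. star_hom L B f \<longrightarrow> star_hom L B g \<longrightarrow>
          (\<forall>i. \<forall>a\<in>cs_carrier (A i). f (psi i a) = chi i a) \<longrightarrow>
          (\<forall>i. \<forall>a\<in>cs_carrier (A i). g (psi i a) = chi i a) \<longrightarrow>
          (\<forall>x\<in>cs_carrier L. f x = g x)))"

text \<open>The maps alpha_i and phi_i of the paper (indices shifted: paper index i is index i-1 here).\<close>

fun alpha_seq :: "(nat \<Rightarrow> 'a cstar) \<Rightarrow> (nat \<Rightarrow> 'a \<Rightarrow> 'a) \<Rightarrow> ('a \<Rightarrow> 'a) \<Rightarrow> nat \<Rightarrow> 'a \<Rightarrow> 'a" where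
  "alpha_seq A beta alpha1 0 = alpha1"
| "alpha_seq A beta alpha1 (Suc i) =
     beta i \<circ> alpha_seq A beta alpha1 i \<circ> inv_into (cs_carrier (A i)) (beta i)"

definition phi_seq :: "(nat \<Rightarrow> 'a cstar) \<Rightarrow> (nat \<Rightarrow> 'a \<Rightarrow> 'a) \<Rightarrow> ('a \<Rightarrow> 'a) \<Rightarrow> nat \<Rightarrow> 'a \<Rightarrow> 'a" where
  "phi_seq A beta alpha1 i = beta i \<circ> alpha_seq A beta alpha1 i"

end

theory Submission
  imports Defs
begin

(* Since phi_i = beta_i \<circ> alpha_i = alpha_(i+1) \<circ> beta_i, both families psi_i \<circ> alpha_i and
   psi_(i+1) \<circ> beta_i are compatible with the connecting maps, so the universal property of the
   limit produces alpha_inf and beta_inf. Each composite of the two sends psi_i a to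
   psi_(i+1) (phi_i a) = psi_i a, hence is the identity by the uniqueness part of the
   universal property. *)

lemma star_hom_in_carrier:
  "star_hom A B f \<Longrightarrow> x \<in> cs_carrier A \<Longrightarrow> f x \<in> cs_carrier B"
  unfolding star_hom_def by blast

lemma star_hom_comp:
  "star_hom A B f \<Longrightarrow> star_hom B C g \<Longrightarrow> star_hom A C (g \<circ> f)"
  unfolding star_hom_def by auto

lemma star_hom_id: "star_hom A A (\<lambda>x. x)"
  unfolding star_hom_def by auto

lemma star_iso_inv_into:
  assumes A: "cstar_algebra A" and f: "star_iso A B f"
  shows "star_hom B A (inv_into (cs_carrier A) f)"
proof -
  let ?g = "inv_into (cs_carrier A) f"
  have hom: "star_hom A B f" and bij: "bij_betw f (cs_carrier A) (cs_carrier B)"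
    using f unfolding star_iso_def by auto
  have g_in: "?g y \<in> cs_carrier A" and f_g: "f (?g y) = y" if "y \<in> cs_carrier B" for y
    using bij that by (auto simp: bij_betw_def inv_into_into f_inv_into_f)
  have g_f: "?g (f x) = x" if "x \<in> cs_carrier A" for x
    using bij that by (simp add: bij_betw_inv_into_left)
  have closed: "\<And>x y. x \<in> cs_carrier A \<Longrightarrow> y \<in> cs_carrier A \<Longrightarrow>
      cs_add A x y \<in> cs_carrier A \<and> cs_mult A x y \<in> cs_carrier A"
    "\<And>x c. x \<in> cs_carrier A \<Longrightarrow> cs_scale A c x \<in> cs_carrier A"
    "\<And>x. x \<in> cs_carrier A \<Longrightarrow> cs_star A x \<in> cs_carrier A"
    using A unfolding cstar_algebra_def Let_def by simp_all
  show ?thesis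
    unfolding star_hom_def
  proof (intro conjI ballI allI)
    fix y z assume y: "y \<in> cs_carrier B" and z: "z \<in> cs_carrier B"
    have "cs_add B y z = f (cs_add A (?g y) (?g z))"
      using hom g_in f_g y z unfolding star_hom_def by simp
    then show "?g (cs_add B y z) = cs_add A (?g y) (?g z)"
      using g_f closed g_in y z by simp
    have "cs_mult B y z = f (cs_mult A (?g y) (?g z))"
      using hom g_in f_g y z unfolding star_hom_def by simp
    then show "?g (cs_mult B y z) = cs_mult A (?g y) (?g z)"
      using g_f closed g_in y z by simp
  next
    fix c y assume y: "y \<in> cs_carrier B"
    have "cs_scale B c y = f (cs_scale A c (?g y))"
      using hom g_in f_g y unfolding star_hom_def by simp
    then show "?g (cs_scale B c y) = cs_scale A c (?g y)"
      using g_f closed g_in y by simp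
  next
    fix y assume y: "y \<in> cs_carrier B"
    show "?g y \<in> cs_carrier A" using g_in y .
    have "cs_star B y = f (cs_star A (?g y))"
      using hom g_in f_g y unfolding star_hom_def by simp
    then show "?g (cs_star B y) = cs_star A (?g y)"
      using g_f closed g_in y by simp
  qed
qed

definition cocone ::
  "(nat \<Rightarrow> 'a cstar) \<Rightarrow> (nat \<Rightarrow> 'a \<Rightarrow> 'a) \<Rightarrow> 'b cstar \<Rightarrow> (nat \<Rightarrow> 'a \<Rightarrow> 'b) \<Rightarrow> bool"
  where "cocone A phi B chi \<longleftrightarrow>
    (\<forall>i. star_hom (A i) B (chi i)) \<and>
    (\<forall>i. \<forall>a\<in>cs_carrier (A i). chi (Suc i) (phi i a) = chi i a)"

lemma inductive_limit_cstar_algebra: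
  "inductive_limit A phi L psi \<Longrightarrow> cstar_algebra L"
  unfolding inductive_limit_def by blast

lemma inductive_limit_cocone:
  "inductive_limit A phi L psi \<Longrightarrow> cocone A phi L psi"
  unfolding inductive_limit_def cocone_def by blast

lemma inductive_limit_universal:
  fixes L B :: "'b cstar"
  assumes lim: "inductive_limit A phi L psi" and B: "cstar_algebra B"
    and chi: "cocone A phi B chi"
  shows inductive_limit_induced_hom:
      "\<exists>f. star_hom L B f \<and> (\<forall>i. \<forall>a\<in>cs_carrier (A i). f (psi i a) = chi i a)"
    and inductive_limit_induced_hom_eq:
      "\<lbrakk>star_hom L B f; star_hom L B g;
        \<forall>i. \<forall>a\<in>cs_carrier (A i). f (psi i a) = chi i a;
        \<forall>i. \<forall>a\<in>cs_carrier (A i). g (psi i a) = chi i a; x \<in> cs_carrier L\<rbrakk>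
        \<Longrightarrow> f x = g x"
  using lim[unfolded inductive_limit_def, THEN conjunct2, THEN conjunct2, THEN conjunct2,
      rule_format, OF B] chi
  unfolding cocone_def by blast+

lemma inductive_limit_hom_eqI:
  fixes L B :: "'b cstar"
  assumes lim: "inductive_limit A phi L psi" and B: "cstar_algebra B"
    and f: "star_hom L B f" and g: "star_hom L B g"
    and agree: "\<And>i a. a \<in> cs_carrier (A i) \<Longrightarrow> f (psi i a) = g (psi i a)"
    and x: "x \<in> cs_carrier L"
  shows "f x = g x"
proof -
  have psi: "cocone A phi L psi"
    using lim by (rule inductive_limit_cocone)
  \<comment> \<open>f and g both factor the cocone of the maps f \<circ> psi i, so the uniqueness clause applies.\<close>
  have "cocone A phi B (\<lambda>i. f \<circ> psi i)"
    using psi star_hom_comp[OF _ f] unfolding cocone_def by auto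
  then show ?thesis
    using inductive_limit_induced_hom_eq[OF lim B _ f g _ _ x] agree by simp
qed

lemma inductive_limit_induced_hom_unique:
  fixes L B :: "'b cstar"
  assumes lim: "inductive_limit A phi L psi" and B: "cstar_algebra B"
    and chi: "cocone A phi B chi"
  shows "\<exists>f. star_hom L B f \<and> (\<forall>i. \<forall>a\<in>cs_carrier (A i). f (psi i a) = chi i a) \<and>
    (\<forall>g. star_hom L B g \<longrightarrow> (\<forall>i. \<forall>a\<in>cs_carrier (A i). g (psi i a) = chi i a) \<longrightarrow>
      (\<forall>x\<in>cs_carrier L. g x = f x))"
proof -
  obtain f where f: "star_hom L B f"
    and f_psi: "\<forall>i. \<forall>a\<in>cs_carrier (A i). f (psi i a) = chi i a"
    using inductive_limit_induced_hom[OF lim B chi] by blast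
  show ?thesis
    using f f_psi inductive_limit_hom_eqI[OF lim B] by (intro exI[of _ f]) auto
qed

lemma inductive_limit_endo_eq_id:
  assumes lim: "inductive_limit A phi L psi" and f: "star_hom L L f"
    and fixes_psi: "\<And>i a. a \<in> cs_carrier (A i) \<Longrightarrow> f (psi i a) = psi i a"
    and x: "x \<in> cs_carrier L"
  shows "f x = x"
  using inductive_limit_hom_eqI[OF lim inductive_limit_cstar_algebra[OF lim] f star_hom_id]
    fixes_psi x by blast

lemma cocone_comp_endos:
  assumes psi: "cocone A phi L psi"
    and gamma: "\<And>i. star_hom (A i) (A i) (gamma i)"
    and commute: "\<And>i a. a \<in> cs_carrier (A i) \<Longrightarrow>
      phi i (gamma i a) = gamma (Suc i) (phi i a)"
  shows "cocone A phi L (\<lambda>i. psi i \<circ> gamma i)"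
  using psi gamma commute star_hom_comp star_hom_in_carrier unfolding cocone_def
  by (metis comp_apply)

lemma cocone_shift:
  assumes psi: "cocone A phi L psi"
    and gamma: "\<And>i. star_hom (A i) (A (Suc i)) (gamma i)"
    and commute: "\<And>i a. a \<in> cs_carrier (A i) \<Longrightarrow>
      phi (Suc i) (gamma i a) = gamma (Suc i) (phi i a)"
  shows "cocone A phi L (\<lambda>i. psi (Suc i) \<circ> gamma i)"
  using psi gamma commute star_hom_comp star_hom_in_carrier unfolding cocone_def
  by (metis comp_apply)

lemma inductive_limit_induced_inverse:
  assumes lim: "inductive_limit A phi L psi"
    and gamma: "\<And>i a. a \<in> cs_carrier (A i) \<Longrightarrow> gamma i a \<in> cs_carrier (A i)"
    and delta: "\<And>i a. a \<in> cs_carrier (A i) \<Longrightarrow> delta i a \<in> cs_carrier (A (Suc i))"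
    and phi_left: "\<And>i a. a \<in> cs_carrier (A i) \<Longrightarrow> phi i a = delta i (gamma i a)"
    and phi_right: "\<And>i a. a \<in> cs_carrier (A i) \<Longrightarrow> phi i a = gamma (Suc i) (delta i a)"
    and f: "star_hom L L f"
    and f_psi: "\<And>i a. a \<in> cs_carrier (A i) \<Longrightarrow> f (psi i a) = psi i (gamma i a)"
    and g: "star_hom L L g"
    and g_psi: "\<And>i a. a \<in> cs_carrier (A i) \<Longrightarrow> g (psi i a) = psi (Suc i) (delta i a)"
  shows "\<forall>x\<in>cs_carrier L. f (g x) = x" and "\<forall>x\<in>cs_carrier L. g (f x) = x"
proof -
  have psi_phi: "psi (Suc i) (phi i a) = psi i a" if "a \<in> cs_carrier (A i)" for i a
    using inductive_limit_cocone[OF lim] that unfolding cocone_def by blast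
  have "(f \<circ> g) x = x" if "x \<in> cs_carrier L" for x
  proof (rule inductive_limit_endo_eq_id[OF lim star_hom_comp[OF g f] _ that])
    fix i a assume a: "a \<in> cs_carrier (A i)"
    have "(f \<circ> g) (psi i a) = psi (Suc i) (gamma (Suc i) (delta i a))"
      using f_psi[OF delta[OF a]] g_psi[OF a] by simp
    also have "\<dots> = psi i a"
      using psi_phi[OF a] phi_right[OF a] by simp
    finally show "(f \<circ> g) (psi i a) = psi i a" .
  qed
  moreover have "(g \<circ> f) x = x" if "x \<in> cs_carrier L" for x
  proof (rule inductive_limit_endo_eq_id[OF lim star_hom_comp[OF f g] _ that])
    fix i a assume a: "a \<in> cs_carrier (A i)"
    have "(g \<circ> f) (psi i a) = psi (Suc i) (delta i (gamma i a))"
      using f_psi[OF a] g_psi[OF gamma[OF a]] by simp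
    also have "\<dots> = psi i a"
      using psi_phi[OF a] phi_left[OF a] by simp
    finally show "(g \<circ> f) (psi i a) = psi i a" .
  qed
  ultimately show "\<forall>x\<in>cs_carrier L. f (g x) = x" and "\<forall>x\<in>cs_carrier L. g (f x) = x"
    by auto
qed

lemma inductive_limit_induced_inverse_pair:
  fixes L :: "'b cstar"
  assumes lim: "inductive_limit A phi L psi"
    and gamma: "\<And>i. star_hom (A i) (A i) (gamma i)"
    and delta: "\<And>i. star_hom (A i) (A (Suc i)) (delta i)"
    and phi_left: "\<And>i a. a \<in> cs_carrier (A i) \<Longrightarrow> phi i a = delta i (gamma i a)"
    and phi_right: "\<And>i a. a \<in> cs_carrier (A i) \<Longrightarrow> phi i a = gamma (Suc i) (delta i a)"
  shows "\<exists>gamma_inf delta_inf.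
    star_hom L L gamma_inf \<and> star_hom L L delta_inf \<and>
    (\<forall>i. \<forall>a\<in>cs_carrier (A i). gamma_inf (psi i a) = psi i (gamma i a)) \<and>
    (\<forall>i. \<forall>a\<in>cs_carrier (A i). delta_inf (psi i a) = psi (Suc i) (delta i a)) \<and>
    (\<forall>f. star_hom L L f \<longrightarrow>
       (\<forall>i. \<forall>a\<in>cs_carrier (A i). f (psi i a) = psi i (gamma i a)) \<longrightarrow>
       (\<forall>x\<in>cs_carrier L. f x = gamma_inf x)) \<and>
    (\<forall>f. star_hom L L f \<longrightarrow>
       (\<forall>i. \<forall>a\<in>cs_carrier (A i). f (psi i a) = psi (Suc i) (delta i a)) \<longrightarrow>
       (\<forall>x\<in>cs_carrier L. f x = delta_inf x)) \<and>
    (\<forall>x\<in>cs_carrier L. gamma_inf (delta_inf x) = x) \<and>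
    (\<forall>x\<in>cs_carrier L. delta_inf (gamma_inf x) = x)"
proof -
  have psi: "cocone A phi L psi" and L: "cstar_algebra L"
    using lim by (rule inductive_limit_cocone, rule inductive_limit_cstar_algebra)
  have gamma_in: "gamma i a \<in> cs_carrier (A i)"
    and delta_in: "delta i a \<in> cs_carrier (A (Suc i))" if "a \<in> cs_carrier (A i)" for i a
    using star_hom_in_carrier[OF gamma that] star_hom_in_carrier[OF delta that] .
  have "phi i (gamma i a) = gamma (Suc i) (phi i a)" if "a \<in> cs_carrier (A i)" for i a
    using phi_right[OF gamma_in[OF that]] phi_left[OF that] by simp
  with psi gamma have "cocone A phi L (\<lambda>i. psi i \<circ> gamma i)"
    by (rule cocone_comp_endos)
  then obtain gamma_inf where gamma_inf: "star_hom L L gamma_inf"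
      "\<forall>i. \<forall>a\<in>cs_carrier (A i). gamma_inf (psi i a) = psi i (gamma i a)"
      "\<forall>f. star_hom L L f \<longrightarrow>
         (\<forall>i. \<forall>a\<in>cs_carrier (A i). f (psi i a) = psi i (gamma i a)) \<longrightarrow>
         (\<forall>x\<in>cs_carrier L. f x = gamma_inf x)"
    using inductive_limit_induced_hom_unique[OF lim L] unfolding comp_def by blast
  have "phi (Suc i) (delta i a) = delta (Suc i) (phi i a)" if "a \<in> cs_carrier (A i)" for i a
    using phi_left[OF delta_in[OF that]] phi_right[OF that] by simp
  with psi delta have "cocone A phi L (\<lambda>i. psi (Suc i) \<circ> delta i)"
    by (rule cocone_shift)
  then obtain delta_inf where delta_inf: "star_hom L L delta_inf"
      "\<forall>i. \<forall>a\<in>cs_carrier (A i). delta_inf (psi i a) = psi (Suc i) (delta i a)"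
      "\<forall>f. star_hom L L f \<longrightarrow>
         (\<forall>i. \<forall>a\<in>cs_carrier (A i). f (psi i a) = psi (Suc i) (delta i a)) \<longrightarrow>
         (\<forall>x\<in>cs_carrier L. f x = delta_inf x)"
    using inductive_limit_induced_hom_unique[OF lim L] unfolding comp_def by blast
  note inverse = inductive_limit_induced_inverse[where gamma = gamma and delta = delta,
      OF lim gamma_in delta_in phi_left phi_right gamma_inf(1) gamma_inf(2)[rule_format]
      delta_inf(1) delta_inf(2)[rule_format]]
  show ?thesis
    using inverse gamma_inf delta_inf by (intro conjI exI)
qed

lemma alpha_seq_star_hom:
  assumes "\<And>i. cstar_algebra (A i)" and "star_hom (A 0) (A 0) alpha1"
    and "\<And>i. star_iso (A i) (A (Suc i)) (beta i)"
  shows "star_hom (A i) (A i) (alpha_seq A beta alpha1 i)"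
proof (induction i)
  case 0
  then show ?case using assms(2) by simp
next
  case (Suc i)
  have "star_hom (A i) (A (Suc i)) (beta i)"
    using assms(3) unfolding star_iso_def by blast
  then have "star_hom (A (Suc i)) (A (Suc i))
      ((beta i \<circ> alpha_seq A beta alpha1 i) \<circ> inv_into (cs_carrier (A i)) (beta i))"
    by (rule star_hom_comp[OF star_iso_inv_into[OF assms(1,3)] star_hom_comp[OF Suc]])
  then show ?case by (simp add: comp_def)
qed

lemma phi_seq_eq_alpha_seq_beta:
  assumes "inj_on (beta i) (cs_carrier (A i))" and "a \<in> cs_carrier (A i)"
  shows "phi_seq A beta alpha1 i a = alpha_seq A beta alpha1 (Suc i) (beta i a)"
  using assms by (simp add: phi_seq_def)

lemma phi_seq_alpha_seq_commute:
  assumes "inj_on (beta i) (cs_carrier (A i))"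
    and "a \<in> cs_carrier (A i)" and "alpha_seq A beta alpha1 i a \<in> cs_carrier (A i)"
  shows "phi_seq A beta alpha1 i (alpha_seq A beta alpha1 i a)
    = alpha_seq A beta alpha1 (Suc i) (phi_seq A beta alpha1 i a)"
  using assms by (simp add: phi_seq_def)

theorem proposition4p1:
  fixes A :: "nat \<Rightarrow> 'a cstar"
    and alpha1 :: "'a \<Rightarrow> 'a"
    and beta :: "nat \<Rightarrow> 'a \<Rightarrow> 'a"
    and L :: "'b cstar"
    and psi :: "nat \<Rightarrow> 'a \<Rightarrow> 'b"
  assumes Acs: "\<And>i. cstar_algebra (A i)"
    and alpha1_hom: "star_hom (A 0) (A 0) alpha1"
    and beta_iso: "\<And>i. star_iso (A i) (A (Suc i)) (beta i)"
    and lim: "inductive_limit A (phi_seq A beta alpha1) L psi"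
  shows
    "(\<forall>i. \<forall>a\<in>cs_carrier (A i).
        phi_seq A beta alpha1 i a = alpha_seq A beta alpha1 (Suc i) (beta i a)) \<and>
     (\<forall>i. \<forall>a\<in>cs_carrier (A i).
        phi_seq A beta alpha1 i a = beta i (alpha_seq A beta alpha1 i a)) \<and>
     (\<forall>i. \<forall>a\<in>cs_carrier (A i).
        phi_seq A beta alpha1 i (alpha_seq A beta alpha1 i a)
          = alpha_seq A beta alpha1 (Suc i) (phi_seq A beta alpha1 i a)) \<and>
     (\<exists>alpha_inf beta_inf.
        star_hom L L alpha_inf \<and> star_hom L L beta_inf \<and>
        (\<forall>i. \<forall>a\<in>cs_carrier (A i). alpha_inf (psi i a) = psi i (alpha_seq A beta alpha1 i a)) \<and>
        (\<forall>i. \<forall>a\<in>cs_carrier (A i). beta_inf (psi i a) = psi (Suc i) (beta i a)) \<and>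
        (\<forall>f. star_hom L L f \<longrightarrow>
           (\<forall>i. \<forall>a\<in>cs_carrier (A i). f (psi i a) = psi i (alpha_seq A beta alpha1 i a)) \<longrightarrow>
           (\<forall>x\<in>cs_carrier L. f x = alpha_inf x)) \<and>
        (\<forall>f. star_hom L L f \<longrightarrow>
           (\<forall>i. \<forall>a\<in>cs_carrier (A i). f (psi i a) = psi (Suc i) (beta i a)) \<longrightarrow>
           (\<forall>x\<in>cs_carrier L. f x = beta_inf x)) \<and>
        (\<forall>x\<in>cs_carrier L. alpha_inf (beta_inf x) = x) \<and>
        (\<forall>x\<in>cs_carrier L. beta_inf (alpha_inf x) = x))"
proof -
  let ?alpha = "alpha_seq A beta alpha1" and ?phi = "phi_seq A beta alpha1"
  have beta_hom: "\<And>i. star_hom (A i) (A (Suc i)) (beta i)"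
    and beta_inj: "\<And>i. inj_on (beta i) (cs_carrier (A i))"
    using beta_iso unfolding star_iso_def bij_betw_def by auto
  have alpha_hom: "star_hom (A i) (A i) (?alpha i)" for i
    using Acs alpha1_hom beta_iso by (rule alpha_seq_star_hom)
  have phi_left: "?phi i a = beta i (?alpha i a)" for i a
    by (simp add: phi_seq_def)
  have phi_right: "?phi i a = ?alpha (Suc i) (beta i a)" if "a \<in> cs_carrier (A i)" for i a
    using beta_inj that by (rule phi_seq_eq_alpha_seq_beta)
  have alpha_commute: "?phi i (?alpha i a) = ?alpha (Suc i) (?phi i a)"
    if "a \<in> cs_carrier (A i)" for i a
    using beta_inj that star_hom_in_carrier[OF alpha_hom that]
    by (rule phi_seq_alpha_seq_commute)
  show ?thesis
  proof (intro conjI)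
    show "\<forall>i. \<forall>a\<in>cs_carrier (A i). ?phi i a = ?alpha (Suc i) (beta i a)"
      using phi_right by blast
    show "\<forall>i. \<forall>a\<in>cs_carrier (A i). ?phi i a = beta i (?alpha i a)"
      using phi_left by blast
    show "\<forall>i. \<forall>a\<in>cs_carrier (A i). ?phi i (?alpha i a) = ?alpha (Suc i) (?phi i a)"
      using alpha_commute by blast
  qed (rule inductive_limit_induced_inverse_pair[where gamma = ?alpha and delta = beta,
      OF lim alpha_hom beta_hom phi_left phi_right])
qed

end
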